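(* For all real numbers $\alpha\ge 0$ and $\beta\ge 0$ with $\alpha\neq\beta$, there exist two SISO deterministic programs $C_1$ and $C_2$, both with uniformly distributed secret input, and a constant $D>0$ such that for every $N>D$, $$IL_\alpha(C_1,N) > IL_\alpha(C_2,N)\quad\text{and}\quad IL_\beta(C_1,N) < IL_\beta(C_2,N).$$
   Context: A SISO deterministic program $C$ is a family indexed by $N\in\mathbb{N}^+$: for each $N$, a random variable $A$ uniformly distributed on $\mathcal{A}_N=\{0,1,\dots,N-1\}$, and a surjective map $F_N$ from $\mathcal{A}_N$ onto a finite set $\mathcal{O}_N$. The output is $O=F_N(A)$, and $\mathbf{p}_N$ denotes the distribution vector of $O$, so $\mathbf{p}_N(o)=|F_N^{-1}(o)|/N$. Two programs $C_1,C_2$ are compared at the same value of $N$. For a probability vector $\mathbf{p}=(p_1,\dots,p_n)$ and $\alpha\in[0,\infty]$, the Rényi entropy is $H_\alpha(\mathbf{p})=\frac{1}{1-\alpha}\log\sum_i p_i^\alpha$ for $\alpha\notin\{1,\infty\}$, with the convention $0^0=0$, so that $H_0(\mathbf{p})$ is the log of the number of nonzero entries. The limiting cases are $H_1(\mathbf{p})=-\sum_i p_i\log p_i$ (Shannon entropy) and $H_\infty(\mathbf{p})=-\log\max_i p_i$ (min-entropy). The $\alpha$-information leakage of $C$ at $N$ is $IL_\alpha(C,N)=H_\alpha(\mathbf{p}_N)$. *)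

theory Defs
  imports "HOL-Analysis.Analysis"
begin

text \<open>Convention 0^0 = 0: only nonzero entries
  contribute.\<close>
definition renyi_entropy :: "real \<Rightarrow> 'a set \<Rightarrow> ('a \<Rightarrow> real) \<Rightarrow> real" where
  "renyi_entropy \<alpha> S p =
     (if \<alpha> = 1 then - (\<Sum>i\<in>{i\<in>S. p i \<noteq> 0}. p i * ln (p i))
      else (1 / (1 - \<alpha>)) * ln (\<Sum>i\<in>{i\<in>S. p i \<noteq> 0}. p i powr \<alpha>))"

text \<open>A SISO deterministic program: for each N, a map F N from A_N = {0..<N} to outputs.
  The output set O_N is the image F N ` {0..<N}, so F N is surjective onto O_N.\<close>
type_synonym siso_program = "nat \<Rightarrow> nat \<Rightarrow> nat"

definition out_set :: "siso_program \<Rightarrow> nat \<Rightarrow> nat set" where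
  "out_set C N = C N ` {0..<N}"

definition out_dist :: "siso_program \<Rightarrow> nat \<Rightarrow> nat \<Rightarrow> real" where
  "out_dist C N y = real (card {a\<in>{0..<N}. C N a = y}) / real N"

definition info_leak :: "real \<Rightarrow> siso_program \<Rightarrow> nat \<Rightarrow> real" where
  "info_leak \<alpha> C N = renyi_entropy \<alpha> (out_set C N) (out_dist C N)"

end

theory Submission
  imports Defs
begin

text \<open>A program that merges the inputs into blocks of sizes b_1, ..., b_r (all other inputs
  being singletons) has, at every order g, Renyi entropy a strictly decreasing function of its
  defect phi_g(b_1) + ... + phi_g(b_r), where phi_g(b) = (b^g - b) / (g - 1) and phi_1(b) = b ln b.
  Compare one block of size 2^(j+1) with k blocks of size 2: the ratio
  phi_g(2^(j+1)) / phi_g(2) = 2^j (1 + 2^(g-1) + ... + 2^(j(g-1))) is strictly increasing in g,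
  and for \<alpha> < \<beta> its increase from \<alpha> to \<beta> exceeds 1 once j is large. An integer k then lies
  strictly between the two ratios, which reverses the order of the two leakages at \<alpha> and at \<beta>
  for every N \<ge> 2^(j+1) + 2k.\<close>

lemma sum_image_fibers:
  fixes g :: "nat \<Rightarrow> real"
  assumes "finite A"
  shows "(\<Sum>y\<in>f ` A. g (card {x\<in>A. f x = y})) =
    (\<Sum>a\<in>A. g (card {x\<in>A. f x = f a}) / card {x\<in>A. f x = f a})"
proof -
  have "(\<Sum>a\<in>{x\<in>A. f x = y}. g (card {x\<in>A. f x = f a}) / card {x\<in>A. f x = f a}) =
      g (card {x\<in>A. f x = y})" if "y \<in> f ` A" for y
  proof -
    have "card {x\<in>A. f x = y} \<noteq> 0"
      using that assms by (auto simp: card_eq_0_iff)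
    then show ?thesis by simp
  qed
  then show ?thesis
    by (simp add: sum.image_gen[OF assms, of _ f])
qed

lemma out_dist_pos:
  assumes "y \<in> out_set C N"
  shows "0 < out_dist C N y"
proof -
  obtain a where "a < N" "C N a = y" using assms unfolding out_set_def by auto
  then have "card {a\<in>{0..<N}. C N a = y} > 0" by (auto simp: card_gt_0_iff)
  then show ?thesis using \<open>a < N\<close> unfolding out_dist_def by simp
qed

lemma info_leak_eq_sum_out_set:
  "info_leak \<gamma> C N =
    (if \<gamma> = 1 then - (\<Sum>y\<in>out_set C N. out_dist C N y * ln (out_dist C N y))
     else 1 / (1 - \<gamma>) * ln (\<Sum>y\<in>out_set C N. out_dist C N y powr \<gamma>))"
proof -
  have "{y\<in>out_set C N. out_dist C N y \<noteq> 0} = out_set C N"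
    using out_dist_pos by fastforce
  then show ?thesis unfolding info_leak_def renyi_entropy_def by simp
qed

definition block_program :: "nat \<Rightarrow> nat \<Rightarrow> siso_program" where
  "block_program k m = (\<lambda>N a. if a < k * m then a div m else a)"

lemma div_eq_iff_in_block:
  fixes x m j :: nat
  assumes "0 < m"
  shows "x div m = j \<longleftrightarrow> j * m \<le> x \<and> x < j * m + m"
proof -
  have "x div m = j \<longleftrightarrow> j \<le> x div m \<and> x div m < Suc j" by linarith
  also have "\<dots> \<longleftrightarrow> j * m \<le> x \<and> x < j * m + m"
    using assms by (simp add: less_eq_div_iff_mult_less_eq div_less_iff_less_mult add.commute)
  finally show ?thesis .
qed

lemma card_block_program_fiber:
  assumes "0 < m" "k * m \<le> N" "a < N"
  shows "card {x\<in>{0..<N}. block_program k m N x = block_program k m N a} =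
    (if a < k * m then m else 1)"
proof (cases "a < k * m")
  case True
  define j where "j = a div m"
  have "j < k" using True by (simp add: j_def less_mult_imp_div_less)
  then have block_le: "j * m + m \<le> k * m"
    by (metis add.commute mult_Suc mult_le_mono1 Suc_leI)
  have "j \<le> j * m" using assms(1) by simp
  then have "j < k * m" using block_le assms(1) by linarith
  then have "{x\<in>{0..<N}. block_program k m N x = block_program k m N a} = {j * m..<j * m + m}"
    using True assms block_le \<open>j < k * m\<close>
    by (auto simp: block_program_def j_def[symmetric] div_eq_iff_in_block)
  then show ?thesis using True by simp
next
  case False
  have "{x\<in>{0..<N}. block_program k m N x = block_program k m N a} = {a}"
    using False assms
    by (auto simp: block_program_def dest: le_less_trans[OF div_le_dividend])
  then show ?thesis using False by simp
qed

lemma sum_block_program_fibers: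
  fixes g :: "nat \<Rightarrow> real"
  assumes "0 < m" "k * m \<le> N"
  shows "(\<Sum>y\<in>out_set (block_program k m) N. g (card {a\<in>{0..<N}. block_program k m N a = y})) =
    real k * g m + real (N - k * m) * g 1"
proof -
  let ?C = "block_program k m N"
  have "(\<Sum>y\<in>out_set (block_program k m) N. g (card {a\<in>{0..<N}. ?C a = y})) =
      (\<Sum>a\<in>{0..<N}. g (card {x\<in>{0..<N}. ?C x = ?C a}) / card {x\<in>{0..<N}. ?C x = ?C a})"
    unfolding out_set_def by (rule sum_image_fibers) simp
  also have "\<dots> = (\<Sum>a\<in>{0..<k * m}. g m / m) + (\<Sum>a\<in>{k * m..<N}. g 1)"
    using assms card_block_program_fiber[OF assms]
    by (simp add: sum.atLeastLessThan_concat[of 0 "k * m" N, symmetric])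
  also have "\<dots> = real k * g m + real (N - k * m) * g 1"
    using assms(1) by simp
  finally show ?thesis .
qed

text \<open>A block of size b > 0 contributes b^\<gamma> = b + (\<gamma> - 1) * renyi_defect \<gamma> b to the
  unnormalised power sum, so an output distribution with block sizes summing to N has power sum
  N + (\<gamma> - 1) * d, where d is the total defect; the Shannon case is the limit \<gamma> \<rightarrow> 1.\<close>

definition renyi_defect :: "real \<Rightarrow> real \<Rightarrow> real" where
  "renyi_defect \<gamma> x = (if \<gamma> = 1 then x * ln x else (x powr \<gamma> - x) / (\<gamma> - 1))"

definition renyi_of_defect :: "real \<Rightarrow> nat \<Rightarrow> real \<Rightarrow> real" where
  "renyi_of_defect \<gamma> N d =
    (if \<gamma> = 1 then ln N - d / N else 1 / (1 - \<gamma>) * ln ((N + (\<gamma> - 1) * d) / N powr \<gamma>))"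

lemma info_leak_block_program:
  assumes "0 < m" "k * m \<le> N" "0 < N"
  shows "info_leak \<gamma> (block_program k m) N = renyi_of_defect \<gamma> N (k * renyi_defect \<gamma> m)"
proof -
  have dist: "out_dist (block_program k m) N y =
      real (card {a\<in>{0..<N}. block_program k m N a = y}) / N" for y
    by (simp add: out_dist_def)
  have diff: "real (N - k * m) = real N - real k * real m"
    using assms(2) by (simp add: of_nat_diff)
  have "(\<Sum>y\<in>out_set (block_program k m) N. out_dist (block_program k m) N y powr \<gamma>) =
      real k * (real m / N) powr \<gamma> + real (N - k * m) * (1 / N) powr \<gamma>"
    unfolding dist
    using sum_block_program_fibers[OF assms(1,2), where g = "\<lambda>c. (real c / N) powr \<gamma>"]
    by simp
  also have "\<dots> = (N + (\<gamma> - 1) * (k * renyi_defect \<gamma> m)) / N powr \<gamma>" if "\<gamma> \<noteq> 1"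
    using that assms(3) by (simp add: renyi_defect_def powr_divide diff field_simps)
  finally have power_sum: "\<gamma> \<noteq> 1 \<Longrightarrow>
      (\<Sum>y\<in>out_set (block_program k m) N. out_dist (block_program k m) N y powr \<gamma>) =
      (N + (\<gamma> - 1) * (k * renyi_defect \<gamma> m)) / N powr \<gamma>" .
  have "(\<Sum>y\<in>out_set (block_program k m) N.
        out_dist (block_program k m) N y * ln (out_dist (block_program k m) N y)) =
      real k * (real m / N * ln (real m / N)) + real (N - k * m) * (1 / N * ln (1 / N))"
    unfolding dist
    using sum_block_program_fibers[OF assms(1,2), where g = "\<lambda>c. real c / N * ln (real c / N)"]
    by simp
  also have "\<dots> = k * renyi_defect 1 m / N - ln N"
    using assms by (simp add: renyi_defect_def ln_div diff field_simps)
  finally show ?thesis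
    using power_sum by (simp add: info_leak_eq_sum_out_set renyi_of_defect_def)
qed

lemma renyi_of_defect_strict_antimono:
  fixes N :: nat and \<gamma> d d' :: real
  assumes "0 < N" "d < d'"
    and pos: "0 < N + (\<gamma> - 1) * d" "0 < N + (\<gamma> - 1) * d'"
  shows "renyi_of_defect \<gamma> N d' < renyi_of_defect \<gamma> N d"
proof -
  let ?S = "\<lambda>d. (N + (\<gamma> - 1) * d) / N powr \<gamma>"
  have S_pos: "0 < ?S d" "0 < ?S d'" using assms by simp_all
  consider "\<gamma> = 1" | "\<gamma> < 1" | "\<gamma> > 1" by linarith
  then show ?thesis
  proof cases
    case 1
    then show ?thesis using assms by (simp add: renyi_of_defect_def divide_strict_right_mono)
  next
    case 2
    then have "(\<gamma> - 1) * d' < (\<gamma> - 1) * d"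
      using assms(2) by (simp add: mult_strict_left_mono_neg)
    then have "ln (?S d') < ln (?S d)"
      using S_pos assms(1) by (simp add: divide_strict_right_mono)
    then show ?thesis using 2 by (simp add: renyi_of_defect_def divide_strict_right_mono)
  next
    case 3
    then have "(\<gamma> - 1) * d < (\<gamma> - 1) * d'"
      using assms(2) by simp
    then have "ln (?S d) < ln (?S d')"
      using S_pos assms(1) by (simp add: divide_strict_right_mono)
    then show ?thesis using 3 by (simp add: renyi_of_defect_def divide_strict_right_mono_neg)
  qed
qed

lemma block_program_power_sum_pos:
  fixes k m N :: nat
  assumes "0 < m" "k * m \<le> N" "0 < N"
  shows "0 < N + (\<gamma> - 1) * (k * renyi_defect \<gamma> m)"
proof (cases "\<gamma> = 1")
  case False
  have "N + (\<gamma> - 1) * (k * renyi_defect \<gamma> m) = k * m powr \<gamma> + (real N - k * m)"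
    using False by (simp add: renyi_defect_def field_simps)
  moreover have "0 < k * m powr \<gamma> + (real N - k * m)"
  proof (cases "k * m < N")
    case True
    then have "real (k * m) < real N" by linarith
    then show ?thesis using assms by (simp add: add_nonneg_pos)
  next
    case False
    then have "0 < k" "real N = k * m" using assms by auto
    then show ?thesis using assms by simp
  qed
  ultimately show ?thesis by simp
qed (use assms in simp)

lemma info_leak_block_program_less:
  assumes "0 < m" "k * m \<le> N" "0 < m'" "k' * m' \<le> N" "0 < N"
    and "k * renyi_defect \<gamma> m < k' * renyi_defect \<gamma> m'"
  shows "info_leak \<gamma> (block_program k' m') N < info_leak \<gamma> (block_program k m) N"
  unfolding info_leak_block_program[OF assms(1,2,5)] info_leak_block_program[OF assms(3,4,5)]
  using assms by (intro renyi_of_defect_strict_antimono block_program_power_sum_pos)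

lemma renyi_defect_power:
  assumes "0 < x"
  shows "renyi_defect \<gamma> (x ^ Suc j) =
    renyi_defect \<gamma> x * x ^ j * (\<Sum>i<Suc j. (x powr (\<gamma> - 1)) ^ i)"
proof (cases "\<gamma> = 1")
  case True
  then show ?thesis using assms by (simp add: renyi_defect_def ln_mult ln_realpow algebra_simps)
next
  case False
  define u where "u = x powr (\<gamma> - 1)"
  have "x powr \<gamma> = x powr (1 + (\<gamma> - 1))" by simp
  also have "\<dots> = x powr 1 * x powr (\<gamma> - 1)" by (rule powr_add)
  finally have x_powr: "x powr \<gamma> = x * u" using assms by (simp add: u_def)
  have power_powr: "(x ^ n) powr \<gamma> = x ^ n * u ^ n" for n
  proof -
    have "(x ^ n) powr \<gamma> = (x powr real n) powr \<gamma>" using assms by (simp add: powr_realpow)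
    also have "\<dots> = (x powr \<gamma>) ^ n" using assms by (simp add: powr_powr powr_power mult.commute)
    finally show ?thesis by (simp add: x_powr power_mult_distrib)
  qed
  have "renyi_defect \<gamma> (x ^ Suc j) = x ^ Suc j * (u ^ Suc j - 1) / (\<gamma> - 1)"
    using False by (simp only: renyi_defect_def power_powr right_diff_distrib if_False mult_1_right)
  also have "\<dots> = x * (u - 1) / (\<gamma> - 1) * x ^ j * (\<Sum>i<Suc j. u ^ i)"
    unfolding power_diff_1_eq[of u "Suc j"] by simp
  also have "x * (u - 1) / (\<gamma> - 1) = renyi_defect \<gamma> x"
    using False by (simp add: renyi_defect_def x_powr right_diff_distrib)
  finally show ?thesis by (simp add: u_def)
qed

lemma renyi_defect_pos:
  assumes "1 < x"
  shows "0 < renyi_defect \<gamma> x"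
proof -
  consider "\<gamma> = 1" | "\<gamma> < 1" | "\<gamma> > 1" by linarith
  then show ?thesis
  proof cases
    case 2
    then have "x powr \<gamma> < x powr 1" using assms by (intro powr_less_mono) auto
    then show ?thesis using 2 assms by (simp add: renyi_defect_def divide_neg_neg)
  next
    case 3
    then have "x powr 1 < x powr \<gamma>" using assms by (intro powr_less_mono) auto
    then show ?thesis using 3 assms by (simp add: renyi_defect_def)
  qed (use assms in \<open>simp add: renyi_defect_def\<close>)
qed

lemma renyi_defect_ratio_gap:
  assumes "\<alpha> < \<beta>"
  shows "\<exists>j. renyi_defect \<alpha> (2 ^ Suc j) / renyi_defect \<alpha> 2 + 1 <
    renyi_defect \<beta> (2 ^ Suc j) / renyi_defect \<beta> 2"
proof -
  define t where "t \<gamma> i = ((2::real) powr (\<gamma> - 1)) ^ i" for \<gamma> and i :: nat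
  have ratio: "renyi_defect \<gamma> (2 ^ Suc j) / renyi_defect \<gamma> 2 = 2 ^ j * (\<Sum>i<Suc j. t \<gamma> i)"
    for \<gamma> j
    using renyi_defect_pos[of 2 \<gamma>] renyi_defect_power[of 2 \<gamma> j] by (simp add: t_def)
  have t_mono: "t \<alpha> i \<le> t \<beta> i" for i
    using assms unfolding t_def by (intro power_mono powr_mono) auto
  define c where "c = t \<beta> 1 - t \<alpha> 1"
  have "0 < c" using assms by (simp add: c_def t_def)
  then obtain n where "1 / c < 2 ^ n" using real_arch_pow[of 2] by auto
  then have "1 < 2 ^ Suc n * c" using \<open>0 < c\<close> by (simp add: field_simps)
  also have "c \<le> (\<Sum>i<Suc (Suc n). t \<beta> i - t \<alpha> i)"
    unfolding c_def using t_mono by (intro member_le_sum) auto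
  then have "2 ^ Suc n * c \<le> 2 ^ Suc n * (\<Sum>i<Suc (Suc n). t \<beta> i - t \<alpha> i)" by simp
  finally have "renyi_defect \<alpha> (2 ^ Suc (Suc n)) / renyi_defect \<alpha> 2 + 1 <
      renyi_defect \<beta> (2 ^ Suc (Suc n)) / renyi_defect \<beta> 2"
    unfolding ratio by (simp add: sum_subtractf algebra_simps)
  then show ?thesis by blast
qed

lemma block_programs_reverse_leak_order:
  fixes \<alpha> \<beta> :: real
  assumes "\<alpha> < \<beta>"
  shows "\<exists>(C1::siso_program) (C2::siso_program) (D::real). D > 0 \<and>
           (\<forall>N::nat. real N > D \<longrightarrow>
              info_leak \<alpha> C1 N > info_leak \<alpha> C2 N \<and>
              info_leak \<beta> C1 N < info_leak \<beta> C2 N)"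
proof -
  obtain j where gap: "renyi_defect \<alpha> (2 ^ Suc j) / renyi_defect \<alpha> 2 + 1 <
      renyi_defect \<beta> (2 ^ Suc j) / renyi_defect \<beta> 2"
    using renyi_defect_ratio_gap[OF assms] by blast
  define x :: nat where "x = 2 ^ Suc j"
  define r where "r \<gamma> = renyi_defect \<gamma> x / renyi_defect \<gamma> 2" for \<gamma>
  define k where "k = nat \<lfloor>r \<alpha>\<rfloor> + 1"
  have defect_2_pos: "0 < renyi_defect \<gamma> 2" for \<gamma> by (rule renyi_defect_pos) simp
  have "1 < x" unfolding x_def by (rule one_less_power) simp_all
  then have "0 \<le> r \<alpha>"
    using defect_2_pos[of \<alpha>] renyi_defect_pos[of x \<alpha>] by (simp add: r_def)
  then have "real k = \<lfloor>r \<alpha>\<rfloor> + 1" by (simp add: k_def)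
  moreover have "r \<alpha> + 1 < r \<beta>" using gap by (simp add: r_def x_def)
  ultimately have "r \<alpha> < k" "k < r \<beta>" using floor_correct[of "r \<alpha>"] by linarith+
  then have less_\<alpha>: "1 * renyi_defect \<alpha> x < k * renyi_defect \<alpha> 2"
    and less_\<beta>: "k * renyi_defect \<beta> 2 < 1 * renyi_defect \<beta> x"
    using defect_2_pos by (simp_all add: r_def field_simps)
  show ?thesis
  proof (intro exI conjI allI impI)
    show "0 < real (x + 2 * k)" using \<open>1 < x\<close> by simp
    fix N :: nat
    assume "real (x + 2 * k) < N"
    then have N: "1 * x \<le> N" "k * 2 \<le> N" "0 < N" by simp_all
    show "info_leak \<alpha> (block_program k 2) N < info_leak \<alpha> (block_program 1 x) N"
      using less_\<alpha> N \<open>1 < x\<close> by (intro info_leak_block_program_less) simp_all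
    show "info_leak \<beta> (block_program 1 x) N < info_leak \<beta> (block_program k 2) N"
      using less_\<beta> N \<open>1 < x\<close> by (intro info_leak_block_program_less) simp_all
  qed
qed

theorem lemma1:
  fixes \<alpha> \<beta> :: real
  assumes "\<alpha> \<ge> 0" and "\<beta> \<ge> 0" and "\<alpha> \<noteq> \<beta>"
  shows "\<exists>(C1::siso_program) (C2::siso_program) (D::real). D > 0 \<and>
           (\<forall>N::nat. real N > D \<longrightarrow>
              info_leak \<alpha> C1 N > info_leak \<alpha> C2 N \<and>
              info_leak \<beta> C1 N < info_leak \<beta> C2 N)"
\<comment> \<open>The construction works for arbitrary real orders.\<close>
proof (cases "\<alpha> < \<beta>")
  case True
  then show ?thesis by (rule block_programs_reverse_leak_order)
next
  case False
  then have "\<beta> < \<alpha>" using assms(3) by simp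
  then obtain C1 C2 :: siso_program and D :: real where "D > 0"
    and "\<forall>N::nat. real N > D \<longrightarrow>
      info_leak \<beta> C1 N > info_leak \<beta> C2 N \<and> info_leak \<alpha> C1 N < info_leak \<alpha> C2 N"
    using block_programs_reverse_leak_order by blast
  then show ?thesis by blast
qed

end
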